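(* Let $r\ge 1$ and let $K$ be a pure $r$-dimensional simplicial complex on $n$ vertices with $\beta_r(K)=t$, where $1\le t\le n-r-1$. Then $$\mathfrak{q}_{r-1}(K)\le rn-r^2+t+1.$$
   Context: A (finite abstract) simplicial complex $K$ on a finite vertex set $V(K)$ is a family of subsets of $V(K)$ closed under taking subsets and containing every singleton; it is on $n$ vertices if $|V(K)|=n$. An $i$-face is a member of cardinality $i+1$; $S_i(K)$ is the set of $i$-faces; facets are inclusion-maximal faces; $K$ is pure if all facets have the same dimension. $\beta_r(K)=\dim_{\mathbb R}H_r(K;\mathbb R)$ is the $r$-th Betti number (real simplicial homology). For an $i$-face $F$, $d_K(F)$ is the number of $(i+1)$-faces containing $F$; two distinct $i$-faces are up-neighbors if their union is an $(i+1)$-face. The signless up Laplacian $Q_i^{\mathrm{up}}(K)$ is the operator on $\mathbb{R}^{S_i(K)}$ given by $(Q_i^{\mathrm{up}}(K)f)(F)=d_K(F)f(F)+\sum_{F'\text{ up-neighbor of }F}f(F')$, and $\mathfrak{q}_i(K)$ is its largest eigenvalue. *)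

theory Defs
  imports "HOL-Analysis.Analysis" "HOL-Library.Function_Algebras"
begin

definition simplicial_complex :: "'a set \<Rightarrow> 'a set set \<Rightarrow> bool" where
  "simplicial_complex V K \<longleftrightarrow> finite V \<and> (\<forall>F\<in>K. F \<subseteq> V)
     \<and> (\<forall>F\<in>K. \<forall>G. G \<subseteq> F \<longrightarrow> G \<in> K) \<and> (\<forall>v\<in>V. {v} \<in> K)"

definition faces :: "'a set set \<Rightarrow> nat \<Rightarrow> 'a set set" where
  "faces K i = {F \<in> K. card F = Suc i}"

definition facets :: "'a set set \<Rightarrow> 'a set set" where
  "facets K = {F \<in> K. \<forall>G\<in>K. F \<subseteq> G \<longrightarrow> G = F}"

definition pure_dim :: "'a set set \<Rightarrow> nat \<Rightarrow> bool" where
  "pure_dim K r \<longleftrightarrow> faces K r \<noteq> {} \<and> (\<forall>F\<in>facets K. card F = Suc r)"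

definition chains :: "'a set set \<Rightarrow> nat \<Rightarrow> ('a set \<Rightarrow> real) set" where
  "chains K i = {f. \<forall>F. F \<notin> faces K i \<longrightarrow> f F = 0}"

text \<open>Simplicial boundary map C_i \<rightarrow> C_(i-1), simplices oriented by the linear order
on the vertices; the boundary of a 0-chain is 0 (unreduced homology).\<close>
fun boundary :: "'a::linorder set set \<Rightarrow> nat \<Rightarrow> ('a set \<Rightarrow> real) \<Rightarrow> ('a set \<Rightarrow> real)" where
  "boundary K 0 f = (\<lambda>G. 0)"
| "boundary K (Suc i) f = (\<lambda>G. if G \<in> faces K i then
      (\<Sum>v\<in>{v. v \<notin> G \<and> insert v G \<in> faces K (Suc i)}.
          (-1) ^ card {u\<in>G. u < v} * f (insert v G))
    else 0)"

abbreviation rdim :: "('a set \<Rightarrow> real) set \<Rightarrow> nat" where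
  "rdim S \<equiv> vector_space.dim (\<lambda>c f x. c * f x) S"

definition betti :: "'a::linorder set set \<Rightarrow> nat \<Rightarrow> nat" where
  "betti K r = rdim {f \<in> chains K r. boundary K r f = (\<lambda>G. 0)}
             - rdim (boundary K (Suc r) ` chains K (Suc r))"

definition up_neighbors :: "'a set set \<Rightarrow> nat \<Rightarrow> 'a set \<Rightarrow> 'a set set" where
  "up_neighbors K i F = {F' \<in> faces K i. F' \<noteq> F \<and> F \<union> F' \<in> faces K (Suc i)}"

definition signless_up_laplacian ::
  "'a set set \<Rightarrow> nat \<Rightarrow> ('a set \<Rightarrow> real) \<Rightarrow> ('a set \<Rightarrow> real)" where
  "signless_up_laplacian K i f = (\<lambda>F. if F \<in> faces K i then
      real (card {G \<in> faces K (Suc i). F \<subseteq> G}) * f F + (\<Sum>F'\<in>up_neighbors K i F. f F')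
    else 0)"

definition q_max :: "'a set set \<Rightarrow> nat \<Rightarrow> real" where
  "q_max K i = Max {\<mu>. \<exists>f\<in>chains K i. f \<noteq> (\<lambda>F. 0) \<and>
      signless_up_laplacian K i f = (\<lambda>F. \<mu> * f F)}"

end

theory Submission
  imports Defs "Jordan_Normal_Form.Spectral_Radius"
begin

text \<open>Write \<open>Q = B B\<^sup>T\<close> for the incidence matrix \<open>B\<close> between \<open>(r-1)\<close>-faces and \<open>r\<close>-faces. If
  \<open>Q f = \<mu> f\<close>, then \<open>g = B\<^sup>T f\<close> satisfies \<open>B\<^sup>T B g = \<mu> g\<close>, and evaluating at an \<open>r\<close>-face \<open>G\<close> where
  \<open>\<bar>g\<bar>\<close> is maximal bounds \<open>\<mu>\<close> by the sum of the degrees \<open>d(F)\<close> of the \<open>(r-1)\<close>-faces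
  \<open>F \<subset> G\<close>. An \<open>(r-1)\<close>-face \<open>F \<subset> G\<close> lies in \<open>G\<close> and in at most
  one further \<open>r\<close>-face \<open>F \<union> {w}\<close> per vertex \<open>w \<notin> G\<close>. Counting by \<open>w\<close> instead, a vertex contributes
  \<open>r + 1\<close> when the whole boundary of the simplex \<open>G \<union> {w}\<close> lies in \<open>K\<close> and at most \<open>r\<close> otherwise,
  so the sum is at most \<open>(r+1) + r(n-r-1) + |W|\<close>, \<open>W\<close> being the set of vertices of the first kind.
  As \<open>K\<close> has no \<open>(r+1)\<close>-faces, \<open>\<beta>\<^sub>r\<close> is the dimension of the space of \<open>r\<close>-cycles, and the
  boundaries of the simplices \<open>G \<union> {w}\<close>, \<open>w \<in> W\<close>, are independent \<open>r\<close>-cycles; so \<open>|W| \<le> t\<close>.\<close>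

section \<open>Linear independence of real-valued functions\<close>

interpretation rfun: vector_space "\<lambda>(c::real) (f::'b \<Rightarrow> real) x. c * f x"
  by unfold_locales (simp_all add: fun_eq_iff algebra_simps)

lemma sum_fun_apply:
  fixes h :: "'c \<Rightarrow> 'b \<Rightarrow> 'd::comm_monoid_add"
  shows "(\<Sum>a\<in>A. h a) x = (\<Sum>a\<in>A. h a x)"
  by (induction A rule: infinite_finite_induct) (auto simp: zero_fun_def plus_fun_def)

lemma rfun_card_le_dim:
  fixes E Z U :: "('b \<Rightarrow> real) set"
  assumes "finite E" "U \<subseteq> rfun.span E" "Z \<subseteq> U" "rfun.independent Z"
  shows "card Z \<le> rfun.dim U"
proof -
  obtain B where B: "B \<subseteq> U" "rfun.independent B" "U \<subseteq> rfun.span B" "card B = rfun.dim U"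
    using rfun.basis_exists by blast
  have "finite B"
    using rfun.independent_span_bound[OF \<open>finite E\<close> B(2)] B(1) assms(2) by blast
  moreover have "Z \<subseteq> rfun.span B"
    using assms(3) B(3) by blast
  ultimately show ?thesis
    using rfun.independent_span_bound[OF _ assms(4)] B(4) by metis
qed

lemma rfun_dim_zero: "rfun.dim {(\<lambda>x. 0) :: 'b \<Rightarrow> real} = 0"
proof -
  have "{(\<lambda>x. 0) :: 'b \<Rightarrow> real} = insert 0 {}"
    by (simp add: zero_fun_def)
  then have "rfun.span {} = rfun.span {(\<lambda>x. 0) :: 'b \<Rightarrow> real}"
    by (simp only: rfun.span_insert_0)
  from rfun.dim_eq_card[OF this rfun.independent_empty] show ?thesis
    by simp
qed

lemma rfun_independent_image:
  fixes z :: "'c \<Rightarrow> 'b \<Rightarrow> real"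
  assumes "finite W"
    and own: "\<And>w. w \<in> W \<Longrightarrow> z w (H w) \<noteq> 0"
    and other: "\<And>w w'. w \<in> W \<Longrightarrow> w' \<in> W \<Longrightarrow> w' \<noteq> w \<Longrightarrow> z w' (H w) = 0"
  shows "inj_on z W" and "rfun.independent (z ` W)"
proof -
  show "inj_on z W"
    by (rule inj_onI) (metis own other)
  show "rfun.independent (z ` W)"
  proof
    assume "rfun.dependent (z ` W)"
    then obtain u where u: "\<exists>v\<in>z ` W. u v \<noteq> 0" "(\<Sum>v\<in>z ` W. (\<lambda>x. u v * v x)) = 0"
      unfolding rfun.dependent_finite[OF finite_imageI[OF \<open>finite W\<close>]] by blast
    then obtain w where w: "w \<in> W" "u (z w) \<noteq> 0"
      by blast
    have "0 = (\<Sum>v\<in>z ` W. u v * v (H w))"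
      using fun_cong[OF u(2), of "H w"] by (simp add: sum_fun_apply)
    also have "\<dots> = u (z w) * z w (H w) + (\<Sum>v\<in>z ` W - {z w}. u v * v (H w))"
      using \<open>finite W\<close> w(1) by (intro sum.remove) auto
    also have "(\<Sum>v\<in>z ` W - {z w}. u v * v (H w)) = 0"
      using other[OF w(1)] by (intro sum.neutral) auto
    finally show False
      using w own by simp
  qed
qed

lemma finite_faces: "finite K \<Longrightarrow> finite (faces K i)"
  by (simp add: faces_def)

lemma face_card: "F \<in> faces K i \<Longrightarrow> card F = Suc i"
  by (simp add: faces_def)

lemma face_finite: "F \<in> faces K i \<Longrightarrow> finite F"
  by (simp add: faces_def card_ge_0_finite)

lemma chains_subset_span:
  assumes "finite (faces K i)"
  shows "chains K i \<subseteq> rfun.span ((\<lambda>H G. if G = H then 1 else 0) ` faces K i)"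
proof
  fix f assume f: "f \<in> chains K i"
  have "f = (\<Sum>H\<in>faces K i. (\<lambda>G. f H * (if G = H then 1 else 0)))"
  proof
    fix G
    show "f G = (\<Sum>H\<in>faces K i. (\<lambda>G. f H * (if G = H then 1 else 0))) G"
      using f assms unfolding sum_fun_apply chains_def
      by (cases "G \<in> faces K i") (auto simp: if_distrib cong: if_cong)
  qed
  also have "\<dots> \<in> rfun.span ((\<lambda>H G. if G = H then 1 else 0) ` faces K i)"
    by (intro rfun.span_sum rfun.span_scale[where x="\<lambda>G. if G = _ then 1 else 0", simplified]
        rfun.span_base) auto
  finally show "f \<in> rfun.span ((\<lambda>H G. if G = H then 1 else 0) ` faces K i)" .
qed

abbreviation cofaces :: "'a set set \<Rightarrow> nat \<Rightarrow> 'a set \<Rightarrow> 'a set set" where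
  "cofaces K i F \<equiv> {G \<in> faces K (Suc i). F \<subseteq> G}"

section \<open>Boundaries of simplices\<close>

text \<open>For a facet \<open>H\<close> of \<open>S\<close> the set \<open>S - H\<close> is a singleton \<open>{x}\<close>, and the exponent is the
  position of \<open>x\<close> in \<open>S\<close>.\<close>
definition simplex_boundary :: "'a::linorder set \<Rightarrow> 'a set \<Rightarrow> real" where
  "simplex_boundary S H =
     (if H \<subseteq> S \<and> Suc (card H) = card S then (-1) ^ (\<Sum>x\<in>S - H. card {u\<in>S. u < x}) else 0)"

lemma simplex_boundary_facet:
  assumes "finite S" "x \<in> S"
  shows "simplex_boundary S (S - {x}) = (-1) ^ card {u\<in>S. u < x}"
proof -
  have "S - (S - {x}) = {x}"
    using assms by auto
  moreover have "Suc (card (S - {x})) = card S"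
    using card_Suc_Diff1[OF assms] .
  ultimately show ?thesis
    unfolding simplex_boundary_def by simp
qed

lemma simplex_boundary_signs_cancel:
  assumes "finite S" "J \<subseteq> S" "S - J = {a, b}" "a < b"
  shows "(-1) ^ card {u\<in>J. u < a} * simplex_boundary S (insert a J)
       + (-1) ^ card {u\<in>J. u < b} * simplex_boundary S (insert b J) = 0"
proof -
  have ab: "a \<in> S" "a \<notin> J" "b \<in> S" "b \<notin> J"
    using assms(3,4) by blast+
  have "insert a J = S - {b}" "insert b J = S - {a}"
    using assms ab by blast+
  moreover have "{u\<in>S. u < b} = insert a {u\<in>J. u < b}" "{u\<in>S. u < a} = {u\<in>J. u < a}"
    using assms ab by auto
  moreover have "finite J"
    using assms(1,2) finite_subset by blast
  ultimately show ?thesis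
    using ab by (simp add: simplex_boundary_facet[OF assms(1)])
qed

context
  fixes S :: "'a::linorder set" and K :: "'a set set" and i :: nat
  assumes finite_S: "finite S" and card_S: "card S = Suc (Suc (Suc i))"
    and facets_in_K: "\<And>H. H \<subseteq> S \<Longrightarrow> card H = Suc (Suc i) \<Longrightarrow> H \<in> K"
begin

lemma simplex_boundary_in_chains: "simplex_boundary S \<in> chains K (Suc i)"
  unfolding chains_def faces_def simplex_boundary_def using card_S facets_in_K by auto

lemma boundary_simplex_boundary: "boundary K (Suc i) (simplex_boundary S) = (\<lambda>G. 0)"
proof
  fix J
  define X where "X = {v. v \<notin> J \<and> insert v J \<in> faces K (Suc i)}"
  define t where "t v = (-1) ^ card {u\<in>J. u < v} * simplex_boundary S (insert v J)" for v
  have bdJ: "boundary K (Suc i) (simplex_boundary S) J = (if J \<in> faces K i then sum t X else 0)"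
    unfolding X_def t_def by simp
  have outside: "t v = 0" if "v \<notin> S \<or> \<not> J \<subseteq> S" for v
    using that unfolding t_def simplex_boundary_def by auto
  show "boundary K (Suc i) (simplex_boundary S) J = 0"
  proof (cases "J \<in> faces K i \<and> J \<subseteq> S \<and> finite X")
    case False
    then consider "J \<notin> faces K i" | "\<not> J \<subseteq> S" | "infinite X"
      by blast
    then show ?thesis
      using bdJ outside by cases simp_all
  next
    case True
    then have J: "J \<in> faces K i" "J \<subseteq> S" and "finite X"
      by auto
    have "card J = Suc i"
      using J(1) by (rule face_card)
    then have "card (S - J) = 2"
      using card_Diff_subset[OF finite_subset[OF J(2) finite_S] J(2)] card_S by simp
    then obtain a b where ab: "S - J = {a, b}" "a < b"
      by (metis card_2_iff doubleton_eq_iff linorder_neqE)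
    have "{a, b} \<subseteq> X"
      using ab J Diff_iff[of a S J] Diff_iff[of b S J] \<open>card J = Suc i\<close> finite_subset[OF J(2) finite_S]
      unfolding X_def faces_def by (auto intro!: facets_in_K)
    then have "sum t X = sum t {a, b}"
      using \<open>finite X\<close> outside ab unfolding X_def
      by (intro sum.mono_neutral_right) auto
    also have "\<dots> = 0"
      using simplex_boundary_signs_cancel[OF finite_S J(2) ab] ab(2) unfolding t_def by simp
    finally show ?thesis
      using bdJ by simp
  qed
qed

end

section \<open>The signless up Laplacian\<close>

definition signless_coboundary :: "'a set set \<Rightarrow> nat \<Rightarrow> ('a set \<Rightarrow> real) \<Rightarrow> 'a set \<Rightarrow> real" where
  "signless_coboundary K i f G = (\<Sum>F\<in>{F \<in> faces K i. F \<subseteq> G}. f F)"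

lemma signless_up_laplacian_in_chains: "signless_up_laplacian K i f \<in> chains K i"
  by (simp add: chains_def signless_up_laplacian_def)

lemma union_eq_of_card_Suc:
  assumes "finite G" "card G = Suc n" "card F = n" "card F' = n" "F \<noteq> F'" "F \<subseteq> G" "F' \<subseteq> G"
  shows "F \<union> F' = G"
proof -
  have "finite (F \<union> F')"
    using assms(1,6,7) by (simp add: finite_subset)
  moreover have "\<not> F' \<subseteq> F"
    using assms(3-5) card_subset_eq[of F F'] \<open>finite (F \<union> F')\<close> by auto
  ultimately have "card F < card (F \<union> F')"
    by (intro psubset_card_mono) auto
  then show ?thesis
    using card_seteq[OF assms(1), of "F \<union> F'"] assms by simp
qed

lemma common_cofaces:
  assumes F: "F \<in> faces K i" and F': "F' \<in> faces K i" and "F \<noteq> F'"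
  shows "cofaces K i F \<inter> cofaces K i F' = (if F' \<in> up_neighbors K i F then {F \<union> F'} else {})"
proof -
  have "G = F \<union> F'" if "G \<in> cofaces K i F \<inter> cofaces K i F'" for G
    using that union_eq_of_card_Suc[of G "Suc i" F F'] face_finite face_card F F' \<open>F \<noteq> F'\<close>
    by (metis (no_types, lifting) IntD1 IntD2 mem_Collect_eq)
  then show ?thesis
    using F' \<open>F \<noteq> F'\<close> unfolding up_neighbors_def by auto
qed

lemma signless_up_laplacian_eq_sum:
  assumes "finite (faces K i)" and F: "F \<in> faces K i"
  shows "signless_up_laplacian K i f F
       = (\<Sum>F'\<in>faces K i. real (card (cofaces K i F \<inter> cofaces K i F')) * f F')"
proof -
  have "(\<Sum>F'\<in>faces K i. real (card (cofaces K i F \<inter> cofaces K i F')) * f F')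
      = real (card (cofaces K i F)) * f F
        + (\<Sum>F'\<in>faces K i - {F}. real (card (cofaces K i F \<inter> cofaces K i F')) * f F')"
    using assms by (simp add: sum.remove)
  also have "(\<Sum>F'\<in>faces K i - {F}. real (card (cofaces K i F \<inter> cofaces K i F')) * f F')
      = (\<Sum>F'\<in>faces K i - {F}. if F' \<in> up_neighbors K i F then f F' else 0)"
  proof (intro sum.cong refl)
    fix F' assume "F' \<in> faces K i - {F}"
    then have "F \<noteq> F'" "F' \<in> faces K i"
      by auto
    then show "real (card (cofaces K i F \<inter> cofaces K i F')) * f F'
        = (if F' \<in> up_neighbors K i F then f F' else 0)"
      by (simp add: common_cofaces[OF F])
  qed
  also have "\<dots> = (\<Sum>F'\<in>up_neighbors K i F. f F')"
    using assms(1) by (simp add: sum.If_cases up_neighbors_def Int_def conj_ac)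
  finally show ?thesis
    using F unfolding signless_up_laplacian_def by simp
qed

lemma signless_up_laplacian_eq_sum_cofaces:
  assumes "finite K" and F: "F \<in> faces K i"
  shows "signless_up_laplacian K i f F = (\<Sum>G\<in>cofaces K i F. signless_coboundary K i f G)"
proof -
  have fin: "finite (faces K j)" for j
    using assms(1) by (rule finite_faces)
  have "(\<Sum>G\<in>cofaces K i F. signless_coboundary K i f G)
      = (\<Sum>G\<in>faces K (Suc i). if F \<subseteq> G then signless_coboundary K i f G else 0)"
    by (rule sum.inter_filter[OF fin])
  also have "\<dots> = (\<Sum>G\<in>faces K (Suc i). \<Sum>F'\<in>faces K i. if F \<subseteq> G \<and> F' \<subseteq> G then f F' else 0)"
    by (intro sum.cong refl) (simp add: signless_coboundary_def sum.inter_filter[OF fin])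
  also have "\<dots> = (\<Sum>F'\<in>faces K i. \<Sum>G\<in>faces K (Suc i). if F \<subseteq> G \<and> F' \<subseteq> G then f F' else 0)"
    by (rule sum.swap)
  also have "\<dots> = (\<Sum>F'\<in>faces K i. real (card (cofaces K i F \<inter> cofaces K i F')) * f F')"
    by (intro sum.cong refl) (simp add: sum.If_cases[OF fin] Int_def conj_ac)
  also have "\<dots> = signless_up_laplacian K i f F"
    using signless_up_laplacian_eq_sum[OF fin F] by simp
  finally show ?thesis ..
qed

lemma signless_up_eigenvector:
  assumes "finite K" "F \<in> faces K i" and eigen: "signless_up_laplacian K i f = (\<lambda>F. \<mu> * f F)"
  shows "\<mu> * f F = (\<Sum>G\<in>cofaces K i F. signless_coboundary K i f G)"
  using signless_up_laplacian_eq_sum_cofaces[OF assms(1,2), of f] fun_cong[OF eigen, of F] by simp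

lemma abs_signless_up_eigenvalue_le:
  assumes "finite K" and eigen: "signless_up_laplacian K i f = (\<lambda>F. \<mu> * f F)"
    and G0: "G0 \<in> faces K (Suc i)" "signless_coboundary K i f G0 \<noteq> 0"
    and max: "\<And>G. G \<in> faces K (Suc i) \<Longrightarrow>
      \<bar>signless_coboundary K i f G\<bar> \<le> \<bar>signless_coboundary K i f G0\<bar>"
  shows "\<bar>\<mu>\<bar> \<le> (\<Sum>F\<in>{F \<in> faces K i. F \<subseteq> G0}. real (card (cofaces K i F)))"
proof -
  let ?g = "signless_coboundary K i f" and ?m = "\<bar>signless_coboundary K i f G0\<bar>"
  have "\<bar>\<mu>\<bar> * ?m = \<bar>\<Sum>F\<in>{F \<in> faces K i. F \<subseteq> G0}. \<mu> * f F\<bar>"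
    by (simp add: signless_coboundary_def abs_mult flip: sum_distrib_left)
  also have "\<dots> = \<bar>\<Sum>F\<in>{F \<in> faces K i. F \<subseteq> G0}. \<Sum>G\<in>cofaces K i F. ?g G\<bar>"
    using signless_up_eigenvector[OF \<open>finite K\<close> _ eigen] by simp
  also have "\<dots> \<le> (\<Sum>F\<in>{F \<in> faces K i. F \<subseteq> G0}. \<Sum>G\<in>cofaces K i F. \<bar>?g G\<bar>)"
    by (intro order_trans[OF sum_abs] sum_mono sum_abs)
  also have "\<dots> \<le> (\<Sum>F\<in>{F \<in> faces K i. F \<subseteq> G0}. \<Sum>G\<in>cofaces K i F. ?m)"
    using max by (intro sum_mono) auto
  also have "\<dots> = (\<Sum>F\<in>{F \<in> faces K i. F \<subseteq> G0}. real (card (cofaces K i F))) * ?m"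
    by (simp add: sum_distrib_right)
  finally show ?thesis
    using G0(2) by simp
qed

lemma signless_up_eigenvalue_le:
  assumes "finite K" and f: "f \<in> chains K i" "f \<noteq> (\<lambda>F. 0)"
    and eigen: "signless_up_laplacian K i f = (\<lambda>F. \<mu> * f F)"
    and "0 \<le> b"
    and bound: "\<And>G. G \<in> faces K (Suc i) \<Longrightarrow>
      (\<Sum>F\<in>{F \<in> faces K i. F \<subseteq> G}. real (card (cofaces K i F))) \<le> b"
  shows "\<mu> \<le> b"
proof (cases "\<forall>G\<in>faces K (Suc i). signless_coboundary K i f G = 0")
  case True
  obtain F where F: "f F \<noteq> 0"
    using f(2) by auto
  then have "F \<in> faces K i"
    using f(1) unfolding chains_def by auto
  then have "\<mu> * f F = 0"
    using signless_up_eigenvector[OF \<open>finite K\<close> _ eigen] True by simp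
  then show ?thesis
    using F \<open>0 \<le> b\<close> by simp
next
  case False
  let ?A = "(\<lambda>G. \<bar>signless_coboundary K i f G\<bar>) ` faces K (Suc i)"
  have "finite ?A" "?A \<noteq> {}"
    using finite_faces[OF \<open>finite K\<close>] False by auto
  then have "Max ?A \<in> ?A"
    by (rule Max_in)
  then obtain G0 where G0: "G0 \<in> faces K (Suc i)" "\<bar>signless_coboundary K i f G0\<bar> = Max ?A"
    by (metis (no_types, lifting) imageE)
  then have max: "\<bar>signless_coboundary K i f G\<bar> \<le> \<bar>signless_coboundary K i f G0\<bar>"
    if "G \<in> faces K (Suc i)" for G
    using \<open>finite ?A\<close> that by simp
  obtain G1 where "G1 \<in> faces K (Suc i)" "signless_coboundary K i f G1 \<noteq> 0"
    using False by blast
  then have "signless_coboundary K i f G0 \<noteq> 0"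
    using max[of G1] by auto
  then have "\<bar>\<mu>\<bar> \<le> b"
    using abs_signless_up_eigenvalue_le[OF \<open>finite K\<close> eigen G0(1) _ max] bound[OF G0(1)] by simp
  then show ?thesis
    by simp
qed

section \<open>Eigenvalues of real symmetric matrices\<close>

lemma real_symmetric_hermitian_form_real:
  fixes M :: "real mat" and v :: "complex vec"
  assumes sym: "\<And>a b. a < m \<Longrightarrow> b < m \<Longrightarrow> M $$ (a, b) = M $$ (b, a)"
  defines "s \<equiv> \<Sum>a\<in>{0..<m}. cnj (v $ a) * (\<Sum>b\<in>{0..<m}. complex_of_real (M $$ (a, b)) * v $ b)"
  shows "Im s = 0"
proof -
  have "cnj s = (\<Sum>a\<in>{0..<m}. \<Sum>b\<in>{0..<m}. v $ a * complex_of_real (M $$ (a, b)) * cnj (v $ b))"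
    unfolding s_def by (simp add: sum_distrib_left mult.assoc)
  also have "\<dots> = (\<Sum>b\<in>{0..<m}. \<Sum>a\<in>{0..<m}. v $ a * complex_of_real (M $$ (a, b)) * cnj (v $ b))"
    by (rule sum.swap)
  also have "\<dots> = s"
    unfolding s_def sum_distrib_left by (intro sum.cong refl) (simp add: sym mult_ac)
  finally show ?thesis
    using Reals_cnj_iff complex_is_Real_iff by blast
qed

text \<open>For an eigenvector \<open>v\<close>, the real Hermitian form \<open>v\<^sup>* M v\<close> equals \<open>\<kappa> \<parallel>v\<parallel>\<^sup>2\<close>.\<close>
lemma real_symmetric_eigenvalue_real:
  fixes M :: "real mat"
  assumes M: "M \<in> carrier_mat m m"
    and sym: "\<And>a b. a < m \<Longrightarrow> b < m \<Longrightarrow> M $$ (a, b) = M $$ (b, a)"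
    and "eigenvalue (map_mat complex_of_real M) \<kappa>"
  shows "Im \<kappa> = 0"
proof -
  obtain v where v: "v \<in> carrier_vec m" "v \<noteq> 0\<^sub>v m" "map_mat complex_of_real M *\<^sub>v v = \<kappa> \<cdot>\<^sub>v v"
    using assms(3) M unfolding eigenvalue_def eigenvector_def by auto
  have row: "(\<Sum>b\<in>{0..<m}. complex_of_real (M $$ (a, b)) * v $ b) = \<kappa> * v $ a" if "a < m" for a
    using arg_cong[OF v(3), of "\<lambda>w. w $ a"] that M v(1) by (simp add: scalar_prod_def)
  define P where "P = (\<Sum>a\<in>{0..<m}. (cmod (v $ a))\<^sup>2)"
  have "(\<Sum>a\<in>{0..<m}. cnj (v $ a) * (\<Sum>b\<in>{0..<m}. complex_of_real (M $$ (a, b)) * v $ b))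
      = (\<Sum>a\<in>{0..<m}. \<kappa> * (cnj (v $ a) * v $ a))"
    by (intro sum.cong) (auto simp: row)
  also have "\<dots> = \<kappa> * complex_of_real P"
    unfolding P_def
    by (simp add: sum_distrib_left complex_mult_cnj cmod_power2 mult.commute sum.distrib distrib_left)
  finally have "Im \<kappa> * P = 0"
    using real_symmetric_hermitian_form_real[where M = M and m = m and v = v] sym by simp
  moreover have "P > 0"
  proof -
    obtain a where "a < m" "v $ a \<noteq> 0"
      using v(1,2) by (metis carrier_vecD eq_vecI index_zero_vec)
    then have "0 < (cmod (v $ a))\<^sup>2" "(cmod (v $ a))\<^sup>2 \<le> P"
      unfolding P_def by (auto intro: member_le_sum)
    then show ?thesis
      by linarith
  qed
  ultimately show ?thesis
    by simp
qed

lemma real_symmetric_has_eigenvalue: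
  fixes M :: "real mat"
  assumes M: "M \<in> carrier_mat m m" and "0 < m"
    and sym: "\<And>a b. a < m \<Longrightarrow> b < m \<Longrightarrow> M $$ (a, b) = M $$ (b, a)"
  shows "\<exists>\<mu>. eigenvalue M \<mu>"
proof -
  have Mc: "map_mat complex_of_real M \<in> carrier_mat m m"
    using M by simp
  obtain \<kappa> where \<kappa>: "eigenvalue (map_mat complex_of_real M) \<kappa>"
    using spectrum_non_empty[OF Mc \<open>0 < m\<close>] unfolding spectrum_def by auto
  then have "\<kappa> = complex_of_real (Re \<kappa>)"
    using real_symmetric_eigenvalue_real[OF M sym] by (simp add: complex_eq_iff)
  then have "poly (map_poly complex_of_real (char_poly M)) (complex_of_real (Re \<kappa>)) = 0"
    using \<kappa> eigenvalue_root_char_poly[OF Mc] of_real_hom.char_poly_hom[OF M] by metis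
  then have "poly (char_poly M) (Re \<kappa>) = 0"
    by (simp add: of_real_hom.poly_map_poly)
  then show ?thesis
    using eigenvalue_root_char_poly[OF M] by blast
qed

section \<open>The matrix of the signless up Laplacian\<close>

context
  fixes K :: "'a set set" and i :: nat and L :: "'a set list"
  assumes distinct_L: "distinct L" and set_L: "set L = faces K i"
begin

definition up_matrix :: "real mat" where
  "up_matrix = mat (length L) (length L)
     (\<lambda>(a, b). real (card (cofaces K i (L ! a) \<inter> cofaces K i (L ! b))))"

definition vec_of_chain :: "('a set \<Rightarrow> real) \<Rightarrow> real vec" where
  "vec_of_chain f = vec (length L) (\<lambda>a. f (L ! a))"

definition chain_of_vec :: "real vec \<Rightarrow> 'a set \<Rightarrow> real" where
  "chain_of_vec v F = (if F \<in> set L then v $ inv_into {..<length L} ((!) L) F else 0)"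

lemma up_matrix_carrier: "up_matrix \<in> carrier_mat (length L) (length L)"
  by (simp add: up_matrix_def)

lemma up_matrix_symmetric:
  "a < length L \<Longrightarrow> b < length L \<Longrightarrow> up_matrix $$ (a, b) = up_matrix $$ (b, a)"
  by (simp add: up_matrix_def Int_commute)

lemma vec_of_chain_carrier: "vec_of_chain f \<in> carrier_vec (length L)"
  by (simp add: vec_of_chain_def)

lemma vec_of_chain_zero: "vec_of_chain (\<lambda>F. 0) = 0\<^sub>v (length L)"
  by (auto simp: vec_of_chain_def)

lemma vec_of_chain_scale: "vec_of_chain (\<lambda>F. c * f F) = c \<cdot>\<^sub>v vec_of_chain f"
  by (auto simp: vec_of_chain_def)

lemma chain_of_vec_in_chains: "chain_of_vec v \<in> chains K i"
  by (simp add: chains_def chain_of_vec_def set_L)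

lemma vec_of_chain_of_vec: "v \<in> carrier_vec (length L) \<Longrightarrow> vec_of_chain (chain_of_vec v) = v"
  using inv_into_f_f[of "(!) L" "{..<length L}"] inj_on_nth[OF distinct_L, of "{..<length L}"]
  by (intro eq_vecI) (auto simp: vec_of_chain_def chain_of_vec_def)

lemma vec_of_chain_inj:
  assumes "f \<in> chains K i" "g \<in> chains K i" "vec_of_chain f = vec_of_chain g"
  shows "f = g"
proof
  fix F
  show "f F = g F"
  proof (cases "F \<in> faces K i")
    case True
    then obtain a where "a < length L" "F = L ! a"
      using set_L by (metis in_set_conv_nth)
    then show ?thesis
      using arg_cong[OF assms(3), of "\<lambda>v. v $ a"] by (simp add: vec_of_chain_def)
  qed (use assms(1,2) in \<open>simp add: chains_def\<close>)
qed

lemma up_matrix_mult_vec: "up_matrix *\<^sub>v vec_of_chain f = vec_of_chain (signless_up_laplacian K i f)"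
proof (rule eq_vecI)
  fix c assume "c < dim_vec (vec_of_chain (signless_up_laplacian K i f))"
  then have c: "c < length L"
    by (simp add: vec_of_chain_def)
  have "(up_matrix *\<^sub>v vec_of_chain f) $ c
      = (\<Sum>b<length L. real (card (cofaces K i (L ! c) \<inter> cofaces K i (L ! b))) * f (L ! b))"
    using c by (simp add: up_matrix_def vec_of_chain_def scalar_prod_def lessThan_atLeast0)
  also have "\<dots> = (\<Sum>F'\<in>faces K i. real (card (cofaces K i (L ! c) \<inter> cofaces K i F')) * f F')"
    using sum.reindex_bij_betw[OF bij_betw_nth[OF distinct_L refl set_L[symmetric]]] by simp
  also have "\<dots> = signless_up_laplacian K i f (L ! c)"
    using signless_up_laplacian_eq_sum[of K i "L ! c" f] set_L c by (metis List.finite_set nth_mem)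
  finally show "(up_matrix *\<^sub>v vec_of_chain f) $ c = vec_of_chain (signless_up_laplacian K i f) $ c"
    using c by (simp add: vec_of_chain_def)
qed (simp add: up_matrix_def vec_of_chain_def)

lemma eigenvalue_up_matrix_iff:
  "eigenvalue up_matrix \<mu> \<longleftrightarrow>
     (\<exists>f\<in>chains K i. f \<noteq> (\<lambda>F. 0) \<and> signless_up_laplacian K i f = (\<lambda>F. \<mu> * f F))"
proof
  assume "eigenvalue up_matrix \<mu>"
  then obtain v where v: "v \<in> carrier_vec (length L)" "v \<noteq> 0\<^sub>v (length L)"
    "up_matrix *\<^sub>v v = \<mu> \<cdot>\<^sub>v v"
    using up_matrix_carrier unfolding eigenvalue_def eigenvector_def by auto
  have scale_in_chains: "(\<lambda>F. \<mu> * chain_of_vec v F) \<in> chains K i"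
    using chain_of_vec_in_chains by (simp add: chains_def)
  have "chain_of_vec v \<noteq> (\<lambda>F. 0)"
    using v vec_of_chain_of_vec vec_of_chain_zero by metis
  moreover have "signless_up_laplacian K i (chain_of_vec v) = (\<lambda>F. \<mu> * chain_of_vec v F)"
    using v(3) up_matrix_mult_vec vec_of_chain_of_vec[OF v(1)] vec_of_chain_scale
    by (intro vec_of_chain_inj signless_up_laplacian_in_chains scale_in_chains) metis
  ultimately show "\<exists>f\<in>chains K i. f \<noteq> (\<lambda>F. 0) \<and> signless_up_laplacian K i f = (\<lambda>F. \<mu> * f F)"
    using chain_of_vec_in_chains by blast
next
  assume "\<exists>f\<in>chains K i. f \<noteq> (\<lambda>F. 0) \<and> signless_up_laplacian K i f = (\<lambda>F. \<mu> * f F)"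
  then obtain f where "f \<in> chains K i" "f \<noteq> (\<lambda>F. 0)" "signless_up_laplacian K i f = (\<lambda>F. \<mu> * f F)"
    by blast
  moreover have "(\<lambda>F. 0) \<in> chains K i"
    by (simp add: chains_def)
  ultimately have "vec_of_chain f \<noteq> 0\<^sub>v (length L)" "up_matrix *\<^sub>v vec_of_chain f = \<mu> \<cdot>\<^sub>v vec_of_chain f"
    using vec_of_chain_inj vec_of_chain_zero up_matrix_mult_vec vec_of_chain_scale by metis+
  then show "eigenvalue up_matrix \<mu>"
    using vec_of_chain_carrier up_matrix_carrier unfolding eigenvalue_def eigenvector_def
    by (metis carrier_matD(1))
qed

end

lemma q_max_le:
  assumes "finite K" "faces K i \<noteq> {}"
    and bound: "\<And>\<mu> f. f \<in> chains K i \<Longrightarrow> f \<noteq> (\<lambda>F. 0) \<Longrightarrow>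
      signless_up_laplacian K i f = (\<lambda>F. \<mu> * f F) \<Longrightarrow> \<mu> \<le> b"
  shows "q_max K i \<le> b"
proof -
  obtain L where L: "distinct L" "set L = faces K i"
    using finite_distinct_list[OF finite_faces[OF \<open>finite K\<close>]] by metis
  define M where "M = up_matrix K i L"
  have M: "M \<in> carrier_mat (length L) (length L)"
    unfolding M_def using up_matrix_carrier[OF L] .
  have eigenvalues: "{\<mu>. \<exists>f\<in>chains K i. f \<noteq> (\<lambda>F. 0) \<and> signless_up_laplacian K i f = (\<lambda>F. \<mu> * f F)}
      = {\<mu>. eigenvalue M \<mu>}"
    unfolding M_def using eigenvalue_up_matrix_iff[OF L] by blast
  have "finite {\<mu>. eigenvalue M \<mu>}"
    using card_finite_spectrum(1)[OF M] unfolding spectrum_def by simp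
  moreover have "{\<mu>. eigenvalue M \<mu>} \<noteq> {}"
    using real_symmetric_has_eigenvalue[OF M] up_matrix_symmetric[OF L] assms(2) L(2)
    unfolding M_def by fastforce
  ultimately have "Max {\<mu>. eigenvalue M \<mu>} \<in> {\<mu>. eigenvalue M \<mu>}"
    by (rule Max_in)
  then show ?thesis
    unfolding q_max_def eigenvalues using bound eigenvalue_up_matrix_iff[OF L] unfolding M_def by blast
qed

section \<open>Counting in simplicial complexes\<close>

lemma sum_card_filter_swap:
  assumes "finite A" "finite B"
  shows "(\<Sum>a\<in>A. card {b\<in>B. P a b}) = (\<Sum>b\<in>B. card {a\<in>A. P a b})"
proof -
  have "(\<Sum>a\<in>A. card {b\<in>B. P a b}) = (\<Sum>a\<in>A. \<Sum>b\<in>B. if P a b then 1 else 0)"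
    using assms by (simp add: sum.If_cases Int_def conj_commute)
  also have "\<dots> = (\<Sum>b\<in>B. \<Sum>a\<in>A. if P a b then 1 else 0)"
    by (rule sum.swap)
  also have "\<dots> = (\<Sum>b\<in>B. card {a\<in>A. P a b})"
    using assms by (simp add: sum.If_cases Int_def conj_commute)
  finally show ?thesis .
qed

text \<open>The vertices \<open>w\<close> such that the whole boundary of the simplex \<open>G \<union> {w}\<close> lies in \<open>K\<close>.\<close>
definition hollow_apexes :: "'a set \<Rightarrow> 'a set set \<Rightarrow> nat \<Rightarrow> 'a set \<Rightarrow> 'a set" where
  "hollow_apexes V K i G = {w \<in> V - G. \<forall>F\<in>faces K i. F \<subseteq> G \<longrightarrow> insert w F \<in> K}"

context
  fixes V :: "'a set" and K :: "'a set set"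
  assumes complex: "simplicial_complex V K"
begin

lemma finite_vertices: "finite V"
  using complex by (simp add: simplicial_complex_def)

lemma face_subset_vertices: "F \<in> K \<Longrightarrow> F \<subseteq> V"
  using complex by (simp add: simplicial_complex_def)

lemma face_subset_closed: "F \<in> K \<Longrightarrow> G \<subseteq> F \<Longrightarrow> G \<in> K"
  using complex unfolding simplicial_complex_def by blast

lemma finite_complex: "finite K"
  using finite_subset[OF _ finite_Pow_iff[THEN iffD2, OF finite_vertices]] face_subset_vertices
  by blast

lemma facets_in_complex_if_hollow_apex:
  assumes G: "G \<in> faces K (Suc i)" and w: "w \<in> hollow_apexes V K i G"
    and H: "H \<subseteq> insert w G" "card H = Suc (Suc i)"
  shows "H \<in> K"
proof (cases "w \<in> H")
  case True
  have "finite H"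
    using H(2) by (metis card.infinite nat.distinct(1))
  then have "card (H - {w}) = Suc i"
    using H(2) True by simp
  moreover have "H - {w} \<subseteq> G"
    using H(1) by blast
  ultimately have "H - {w} \<in> faces K i"
    using G face_subset_closed unfolding faces_def by blast
  then have "insert w (H - {w}) \<in> K"
    using w \<open>H - {w} \<subseteq> G\<close> unfolding hollow_apexes_def by blast
  then show ?thesis
    using True by (simp add: insert_absorb)
next
  case False
  then have "H \<subseteq> G"
    using H(1) by blast
  then have "H = G"
    using card_subset_eq[OF face_finite[OF G]] H(2) face_card[OF G] by simp
  then show ?thesis
    using G by (simp add: faces_def)
qed

lemma cofaces_subset_insert:
  assumes F: "F \<in> faces K i" and G: "G \<in> faces K (Suc i)" and "F \<subseteq> G"
  shows "cofaces K i F \<subseteq> insert G ((\<lambda>w. insert w F) ` {w \<in> V - G. insert w F \<in> K})"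
proof
  fix G' assume G': "G' \<in> cofaces K i F"
  then have "card (G' - F) = 1"
    using F card_Diff_subset[OF face_finite[OF F], of G'] face_card[of G' K "Suc i"] face_card[OF F]
    by simp
  then obtain x where "G' - F = {x}"
    by (rule card_1_singletonE)
  then have G'_eq: "G' = insert x F" and "x \<in> G'"
    using G' by blast+
  show "G' \<in> insert G ((\<lambda>w. insert w F) ` {w \<in> V - G. insert w F \<in> K})"
  proof (cases "x \<in> G")
    case True
    then have "G' \<subseteq> G"
      using G'_eq \<open>F \<subseteq> G\<close> by blast
    then have "G' = G"
      using card_subset_eq[OF face_finite[OF G]] face_card[OF G] face_card[of G' K "Suc i"] G'
      by simp
    then show ?thesis
      by simp
  next
    case False
    have "x \<in> V" "G' \<in> K"
      using G' \<open>x \<in> G'\<close> face_subset_vertices unfolding faces_def by blast+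
    then show ?thesis
      using False G'_eq by blast
  qed
qed

lemma card_cofaces_le:
  assumes "F \<in> faces K i" "G \<in> faces K (Suc i)" "F \<subseteq> G"
  shows "card (cofaces K i F) \<le> Suc (card {w \<in> V - G. insert w F \<in> K})"
proof -
  have "card (cofaces K i F) \<le> card (insert G ((\<lambda>w. insert w F) ` {w \<in> V - G. insert w F \<in> K}))"
    using cofaces_subset_insert[OF assms] finite_vertices by (intro card_mono) auto
  also have "\<dots> \<le> Suc (card ((\<lambda>w. insert w F) ` {w \<in> V - G. insert w F \<in> K}))"
    using finite_vertices by (simp add: card_insert_if)
  also have "\<dots> \<le> Suc (card {w \<in> V - G. insert w F \<in> K})"
    using finite_vertices by (simp add: card_image_le)
  finally show ?thesis .
qed

lemma card_faces_below_le:
  assumes "G \<in> faces K (Suc i)"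
  shows "card {F \<in> faces K i. F \<subseteq> G} \<le> Suc (Suc i)"
proof -
  have "card {F \<in> faces K i. F \<subseteq> G} \<le> card {F. F \<subseteq> G \<and> card F = Suc i}"
    using face_finite[OF assms] by (intro card_mono) (auto simp: faces_def)
  also have "\<dots> = Suc (Suc i)"
    using n_subsets[OF face_finite[OF assms]] by (simp add: face_card[OF assms])
  finally show ?thesis .
qed

lemma card_faces_below_insert_le:
  assumes G: "G \<in> faces K (Suc i)" and w: "w \<in> V - G"
  shows "card {F \<in> {F \<in> faces K i. F \<subseteq> G}. insert w F \<in> K}
    \<le> Suc i + (if w \<in> hollow_apexes V K i G then 1 else 0)"
proof -
  have fin: "finite {F \<in> faces K i. F \<subseteq> G}"
    using finite_faces[OF finite_complex] by simp
  show ?thesis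
  proof (cases "w \<in> hollow_apexes V K i G")
    case True
    have "card {F \<in> {F \<in> faces K i. F \<subseteq> G}. insert w F \<in> K} \<le> card {F \<in> faces K i. F \<subseteq> G}"
      using fin by (intro card_mono) auto
    then show ?thesis
      using True card_faces_below_le[OF G] by simp
  next
    case False
    then have "{F \<in> {F \<in> faces K i. F \<subseteq> G}. insert w F \<in> K} \<subset> {F \<in> faces K i. F \<subseteq> G}"
      using w unfolding hollow_apexes_def by blast
    then have "card {F \<in> {F \<in> faces K i. F \<subseteq> G}. insert w F \<in> K} < card {F \<in> faces K i. F \<subseteq> G}"
      using fin by (rule psubset_card_mono[rotated])
    then show ?thesis
      using False card_faces_below_le[OF G] by simp
  qed
qed

lemma sum_card_cofaces_le:
  assumes G: "G \<in> faces K (Suc i)"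
  shows "(\<Sum>F\<in>{F \<in> faces K i. F \<subseteq> G}. card (cofaces K i F))
    \<le> Suc (Suc i) + Suc i * (card V - Suc (Suc i)) + card (hollow_apexes V K i G)"
proof -
  define Fs where "Fs = {F \<in> faces K i. F \<subseteq> G}"
  define W where "W = hollow_apexes V K i G"
  have fin: "finite Fs" "finite (V - G)"
    using finite_faces[OF finite_complex] finite_vertices by (simp_all add: Fs_def)
  have "W \<subseteq> V - G"
    unfolding W_def hollow_apexes_def by blast
  have "(\<Sum>F\<in>Fs. card (cofaces K i F)) \<le> (\<Sum>F\<in>Fs. Suc (card {w \<in> V - G. insert w F \<in> K}))"
    using card_cofaces_le[OF _ G] by (intro sum_mono) (auto simp: Fs_def)
  also have "\<dots> = card Fs + (\<Sum>w\<in>V - G. card {F \<in> Fs. insert w F \<in> K})"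
    using sum_card_filter_swap[OF fin, of "\<lambda>F w. insert w F \<in> K"] by (simp add: sum_Suc)
  also have "\<dots> \<le> card Fs + (\<Sum>w\<in>V - G. Suc i + (if w \<in> W then 1 else 0))"
    using card_faces_below_insert_le[OF G] unfolding Fs_def W_def by (intro add_left_mono sum_mono) auto
  also have "\<dots> = card Fs + Suc i * card (V - G) + card W"
    using fin(2) \<open>W \<subseteq> V - G\<close> by (simp add: sum_Suc sum.distrib sum.If_cases Int_absorb1)
  also have "card (V - G) = card V - Suc (Suc i)"
    using G face_subset_vertices card_Diff_subset[OF face_finite[OF G]] by (simp add: faces_def)
  finally show ?thesis
    using card_faces_below_le[OF G] unfolding Fs_def W_def by linarith
qed

end

context
  fixes V :: "'a::linorder set" and K :: "'a set set" and i :: nat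
  assumes complex: "simplicial_complex V K" and pure: "pure_dim K (Suc i)"
begin

lemma no_faces_above_dim: "faces K (Suc (Suc i)) = {}"
proof (rule ccontr)
  assume "faces K (Suc (Suc i)) \<noteq> {}"
  then obtain H where H: "H \<in> K" "card H = Suc (Suc (Suc i))"
    unfolding faces_def by auto
  obtain G where G: "G \<in> K" "H \<subseteq> G" "\<forall>G'\<in>K. G \<subseteq> G' \<longrightarrow> G = G'"
    using finite_has_maximal2[OF finite_complex[OF complex] H(1)] by blast
  then have "card G = Suc (Suc i)"
    using pure unfolding pure_dim_def facets_def by auto
  moreover have "card H \<le> card G"
    using G face_subset_vertices[OF complex] finite_vertices[OF complex]
    by (meson card_mono finite_subset)
  ultimately show False
    using H(2) by simp
qed

lemma betti_eq_dim_cycles: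
  "betti K (Suc i) = rdim {f \<in> chains K (Suc i). boundary K (Suc i) f = (\<lambda>G. 0)}"
proof -
  have "boundary K (Suc (Suc i)) f = (\<lambda>G. 0)" for f
    using no_faces_above_dim by (simp add: fun_eq_iff)
  moreover have "(\<lambda>G. 0) \<in> chains K (Suc (Suc i))"
    by (simp add: chains_def)
  ultimately have "boundary K (Suc (Suc i)) ` chains K (Suc (Suc i)) = {\<lambda>G. 0}"
    by auto
  then show ?thesis
    unfolding betti_def by (simp add: rfun_dim_zero)
qed

lemma simplex_boundary_cycle:
  assumes G: "G \<in> faces K (Suc i)" and w: "w \<in> hollow_apexes V K i G"
  shows "simplex_boundary (insert w G) \<in> {f \<in> chains K (Suc i). boundary K (Suc i) f = (\<lambda>G. 0)}"
proof -
  have fin: "finite (insert w G)"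
    using face_finite[OF G] by simp
  have card: "card (insert w G) = Suc (Suc (Suc i))"
    using w face_finite[OF G] face_card[OF G] unfolding hollow_apexes_def by simp
  note facets = facets_in_complex_if_hollow_apex[OF complex G w]
  show ?thesis
    using simplex_boundary_in_chains[OF fin card facets] boundary_simplex_boundary[OF fin card facets]
    by blast
qed

text \<open>The cycles bounding the simplices \<open>G \<union> {w}\<close> are independent: for a fixed \<open>x \<in> G\<close>, the face
  \<open>G \<union> {w} - {x}\<close> occurs only in the cycle of \<open>w\<close>.\<close>
lemma card_hollow_apexes_le_betti:
  assumes G: "G \<in> faces K (Suc i)"
  shows "card (hollow_apexes V K i G) \<le> betti K (Suc i)"
proof -
  define W where "W = hollow_apexes V K i G"
  define Z where "Z = {f \<in> chains K (Suc i). boundary K (Suc i) f = (\<lambda>G. 0)}"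
  define z where "z w = simplex_boundary (insert w G)" for w
  have "finite W" and W_G: "\<And>w. w \<in> W \<Longrightarrow> w \<notin> G"
    using finite_vertices[OF complex] unfolding W_def hollow_apexes_def by auto
  have "G \<noteq> {}"
    using face_card[OF G] by auto
  then obtain x where "x \<in> G"
    by blast
  have own: "z w (insert w G - {x}) \<noteq> 0" if "w \<in> W" for w
    unfolding z_def using simplex_boundary_facet[of "insert w G" x] face_finite[OF G] \<open>x \<in> G\<close> by simp
  have other: "z w' (insert w G - {x}) = 0" if "w \<in> W" "w' \<in> W" "w' \<noteq> w" for w w'
    using that W_G \<open>x \<in> G\<close> unfolding z_def simplex_boundary_def by auto
  have "inj_on z W" "rfun.independent (z ` W)"
    using rfun_independent_image[where H = "\<lambda>w. insert w G - {x}" and z = z, OF \<open>finite W\<close> own other]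
    by blast+
  moreover have "z ` W \<subseteq> Z"
    unfolding W_def Z_def z_def using simplex_boundary_cycle[OF G] by (rule image_subsetI)
  ultimately have "card (z ` W) \<le> rdim Z"
    using chains_subset_span[OF finite_faces[OF finite_complex[OF complex]]]
    by (intro rfun_card_le_dim[where E = "(\<lambda>H G. if G = H then 1 else 0) ` faces K (Suc i)"])
      (auto simp: Z_def finite_faces[OF finite_complex[OF complex]])
  then show ?thesis
    using \<open>inj_on z W\<close> betti_eq_dim_cycles unfolding W_def Z_def by (simp add: card_image)
qed

lemma degree_sum_le:
  assumes G: "G \<in> faces K (Suc i)"
  shows "(\<Sum>F\<in>{F \<in> faces K i. F \<subseteq> G}. real (card (cofaces K i F)))
    \<le> real (Suc i * card V) - real (Suc i) ^ 2 + real (betti K (Suc i)) + 1"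
proof -
  have "Suc (Suc i) \<le> card V"
    using G face_subset_vertices[OF complex] finite_vertices[OF complex] card_mono
    by (metis (no_types, lifting) face_card mem_Collect_eq faces_def)
  have "(\<Sum>F\<in>{F \<in> faces K i. F \<subseteq> G}. card (cofaces K i F))
      \<le> Suc (Suc i) + Suc i * (card V - Suc (Suc i)) + betti K (Suc i)"
    using sum_card_cofaces_le[OF complex G] card_hollow_apexes_le_betti[OF G] by linarith
  then have "(\<Sum>F\<in>{F \<in> faces K i. F \<subseteq> G}. real (card (cofaces K i F)))
      \<le> real (Suc (Suc i) + Suc i * (card V - Suc (Suc i)) + betti K (Suc i))"
    by (simp only: of_nat_sum [symmetric] of_nat_le_iff)
  also have "\<dots> = real (Suc i * card V) - real (Suc i) ^ 2 + real (betti K (Suc i)) + 1"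
    using of_nat_diff[OF \<open>Suc (Suc i) \<le> card V\<close>, where 'a = real]
    by (simp only: of_nat_add of_nat_mult) (simp add: algebra_simps power2_eq_square)
  finally show ?thesis .
qed

lemma q_max_le_degree_bound:
  "q_max K i \<le> real (Suc i * card V) - real (Suc i) ^ 2 + real (betti K (Suc i)) + 1"
proof (rule q_max_le[OF finite_complex[OF complex]])
  obtain G where G: "G \<in> faces K (Suc i)"
    using pure unfolding pure_dim_def by blast
  then obtain x where "x \<in> G"
    by (metis card.empty ex_in_conv face_card nat.distinct(1))
  then have "G - {x} \<in> faces K i"
    using G face_subset_closed[OF complex, of G "G - {x}"] face_finite[OF G]
    by (auto simp: faces_def)
  then show "faces K i \<noteq> {}"
    by blast
  fix \<mu> f
  assume "f \<in> chains K i" "f \<noteq> (\<lambda>F. 0)" "signless_up_laplacian K i f = (\<lambda>F. \<mu> * f F)"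
  moreover have "0 \<le> real (Suc i * card V) - real (Suc i) ^ 2 + real (betti K (Suc i)) + 1"
    by (rule order_trans[OF sum_nonneg degree_sum_le[OF G]]) simp
  ultimately show "\<mu> \<le> real (Suc i * card V) - real (Suc i) ^ 2 + real (betti K (Suc i)) + 1"
    using signless_up_eigenvalue_le[OF finite_complex[OF complex]] degree_sum_le by blast
qed

end

theorem mainTheorem11:
  fixes V :: "'a::linorder set" and K :: "'a set set" and n r t :: nat
  assumes "simplicial_complex V K" and "card V = n"
    and "r \<ge> 1" and "pure_dim K r"
    and "betti K r = t" and "1 \<le> t" and "int t \<le> int n - int r - 1"
  shows "q_max K (r - 1) \<le> real (r * n) - real r ^ 2 + real t + 1"
proof -
  obtain i where "r = Suc i"
    using \<open>r \<ge> 1\<close> by (cases r) auto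
  then show ?thesis
    using q_max_le_degree_bound[of V K i] assms(1,2,4,5) by simp
qed

end
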